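(* Let $G\subseteq\mathrm{GL}_n(\mathbb{R})$ be a finite group and let $H$ be a broad subgroup of $G$. Then every ring homomorphism $\phi:\mathbb{R}[\underline{X}]^G\to\mathbb{R}$ of principal orbit type extends to a ring homomorphism $\tilde\phi:\mathbb{R}[\underline{X}]^H\to\mathbb{R}$.
   Context: $\mathbb{R}[\underline{X}]=\mathbb{R}[X_1,\dots,X_n]$; $\mathbb{R}[\underline{X}]^K$ is the ring of polynomials invariant under a subgroup $K$. An elementary abelian $2$-subgroup $H$ of $G$ is broad if every involution of $G$ is conjugate in $G$ to an element of $H$. Every ring homomorphism $\phi:\mathbb{R}[\underline{X}]^G\to\mathbb{R}$ extends to a homomorphism $\mathbb{R}[\underline{X}]\to\mathbb{C}$, i.e. is evaluation at some point $x\in\mathbb{C}^n$, and these points form a single $G$-orbit. $\phi$ is of principal orbit type if such a point $x$ has trivial stabilizer in $G$. *)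

theory Defs
  imports "HOL-Analysis.Analysis" "HOL-Library.Poly_Mapping"
begin

text \<open>Real polynomials in the variables X_i, i ranging over the finite type 'n
  (so n = CARD('n)): finitely supported maps from monomials (exponent vectors) to
  coefficients, with the convolution ring structure of Poly_Mapping.\<close>
type_synonym 'n rpoly = "('n \<Rightarrow>\<^sub>0 nat) \<Rightarrow>\<^sub>0 real"

definition peval :: "'n::finite rpoly \<Rightarrow> ('n \<Rightarrow> 'a::{real_algebra_1,comm_ring_1}) \<Rightarrow> 'a" where
  "peval p x = (\<Sum>m\<in>Poly_Mapping.keys p.
      of_real (Poly_Mapping.lookup p m) * (\<Prod>i\<in>UNIV. x i ^ Poly_Mapping.lookup m i))"

definition act :: "real^'n^'n \<Rightarrow> ('n::finite \<Rightarrow> 'a::real_algebra_1) \<Rightarrow> ('n \<Rightarrow> 'a)" where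
  "act g x = (\<lambda>i. \<Sum>j\<in>UNIV. of_real (g $ i $ j) * x j)"

definition finite_matrix_group :: "(real^'n^'n) set \<Rightarrow> bool" where
  "finite_matrix_group G \<longleftrightarrow> finite G \<and> G \<subseteq> {A. invertible A} \<and> mat 1 \<in> G \<and>
     (\<forall>a\<in>G. \<forall>b\<in>G. a ** b \<in> G) \<and> (\<forall>a\<in>G. matrix_inv a \<in> G)"

definition is_subgroup :: "(real^'n^'n) set \<Rightarrow> (real^'n^'n) set \<Rightarrow> bool" where
  "is_subgroup H G \<longleftrightarrow> H \<subseteq> G \<and> mat 1 \<in> H \<and>
     (\<forall>a\<in>H. \<forall>b\<in>H. a ** b \<in> H) \<and> (\<forall>a\<in>H. matrix_inv a \<in> H)"

definition elem_abelian_2_subgroup :: "(real^'n^'n) set \<Rightarrow> (real^'n^'n) set \<Rightarrow> bool" where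
  "elem_abelian_2_subgroup H G \<longleftrightarrow> is_subgroup H G \<and>
     (\<forall>a\<in>H. \<forall>b\<in>H. a ** b = b ** a) \<and> (\<forall>a\<in>H. a ** a = mat 1)"

definition involution :: "real^'n^'n \<Rightarrow> bool" where
  "involution g \<longleftrightarrow> g \<noteq> mat 1 \<and> g ** g = mat 1"

definition broad :: "(real^'n^'n) set \<Rightarrow> (real^'n^'n) set \<Rightarrow> bool" where
  "broad H G \<longleftrightarrow> elem_abelian_2_subgroup H G \<and>
     (\<forall>g\<in>G. involution g \<longrightarrow> (\<exists>k\<in>G. matrix_inv k ** g ** k \<in> H))"

definition inv_ring :: "(real^'n^'n) set \<Rightarrow> 'n::finite rpoly set" where
  "inv_ring K = {p. \<forall>g\<in>K. \<forall>x::'n \<Rightarrow> real. peval p (act g x) = peval p x}"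

definition ring_hom_on :: "'n::finite rpoly set \<Rightarrow> ('n rpoly \<Rightarrow> real) \<Rightarrow> bool" where
  "ring_hom_on S \<phi> \<longleftrightarrow> \<phi> 1 = 1 \<and>
     (\<forall>p\<in>S. \<forall>q\<in>S. \<phi> (p + q) = \<phi> p + \<phi> q \<and> \<phi> (p * q) = \<phi> p * \<phi> q)"

definition principal_orbit_type :: "(real^'n^'n) set \<Rightarrow> ('n::finite rpoly \<Rightarrow> real) \<Rightarrow> bool" where
  "principal_orbit_type G \<phi> \<longleftrightarrow> (\<exists>x::'n \<Rightarrow> complex.
      (\<forall>p\<in>inv_ring G. complex_of_real (\<phi> p) = peval p x) \<and>
      (\<forall>g\<in>G. act g x = x \<longrightarrow> g = mat 1))"

end

theory Submission
  imports Defs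
begin

(* Let \<phi> be evaluation at a complex point x with trivial stabilizer. Since \<phi> is real
   valued, the orbit of the conjugate point cnj x meets G x: otherwise the G-average of the
   imaginary part of a complex polynomial that is 1 on G x and 0 on cnj (G x) would be a real
   invariant with non-real value at x. So cnj x = g x with g \<in> G, and g\<^sup>2 fixes x, hence g is
   an involution or the identity. Conjugating g into H by some k \<in> G, the point y = k\<^sup>-\<^sup>1 x
   satisfies cnj y = h y with h \<in> H, so every H-invariant is real at y, and evaluation at y
   extends \<phi>. *)

definition mon_eval :: "('n::finite \<Rightarrow>\<^sub>0 nat) \<Rightarrow> ('n \<Rightarrow> 'a::{real_algebra_1,comm_ring_1}) \<Rightarrow> 'a" where
  "mon_eval m x = (\<Prod>i\<in>UNIV. x i ^ Poly_Mapping.lookup m i)"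

lemma mon_eval_add: "mon_eval (m + m') x = mon_eval m x * mon_eval m' x"
  by (simp add: mon_eval_def lookup_add power_add prod.distrib)

lemma peval_eq_sum_mon_eval:
  "peval p x = (\<Sum>m\<in>Poly_Mapping.keys p. of_real (Poly_Mapping.lookup p m) * mon_eval m x)"
  by (simp add: peval_def mon_eval_def)

lemma peval_eq_sum_superset:
  assumes "finite S" "Poly_Mapping.keys p \<subseteq> S"
  shows "peval p x = (\<Sum>m\<in>S. of_real (Poly_Mapping.lookup p m) * mon_eval m x)"
  unfolding peval_eq_sum_mon_eval
  by (rule sum.mono_neutral_left[OF assms]) (auto simp: in_keys_iff)

lemma peval_zero [simp]: "peval 0 x = 0"
  by (simp add: peval_def)

lemma peval_one [simp]: "peval 1 x = 1"
  by (simp add: peval_eq_sum_mon_eval mon_eval_def lookup_one)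

lemma peval_single: "peval (Poly_Mapping.single m c) x = of_real c * mon_eval m x"
  by (simp add: peval_eq_sum_mon_eval)

lemma peval_add: "peval (p + q) x = peval p x + peval q x"
proof -
  let ?S = "Poly_Mapping.keys p \<union> Poly_Mapping.keys q"
  have "peval (p + q) x = (\<Sum>m\<in>?S. of_real (Poly_Mapping.lookup (p + q) m) * mon_eval m x)"
    by (rule peval_eq_sum_superset) (auto simp: keys_add)
  also have "\<dots> = (\<Sum>m\<in>?S. of_real (Poly_Mapping.lookup p m) * mon_eval m x)
      + (\<Sum>m\<in>?S. of_real (Poly_Mapping.lookup q m) * mon_eval m x)"
    by (simp add: lookup_add distrib_right sum.distrib)
  also have "\<dots> = peval p x + peval q x"
    by (subst (1 2) peval_eq_sum_superset[of ?S]) auto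
  finally show ?thesis .
qed

lemma peval_sum: "peval (sum f S) x = (\<Sum>s\<in>S. peval (f s) x)"
  by (induction S rule: infinite_finite_induct) (auto simp: peval_add)

lemma sum_single_keys: "p = (\<Sum>m\<in>Poly_Mapping.keys p. Poly_Mapping.single m (Poly_Mapping.lookup p m))"
  by (rule poly_mapping_eqI) (auto simp: lookup_sum lookup_single when_def in_keys_iff
      intro: sum.neutral cong: if_cong)

lemma peval_mult: "peval (p * q) x = peval p x * peval q x"
proof -
  let ?P = "Poly_Mapping.keys p" and ?Q = "Poly_Mapping.keys q"
  have "peval (p * q) x = peval ((\<Sum>k\<in>?P. Poly_Mapping.single k (Poly_Mapping.lookup p k)) *
      (\<Sum>l\<in>?Q. Poly_Mapping.single l (Poly_Mapping.lookup q l))) x"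
    using sum_single_keys[of p] sum_single_keys[of q] by simp
  also have "\<dots> = (\<Sum>k\<in>?P. \<Sum>l\<in>?Q.
      peval (Poly_Mapping.single (k + l) (Poly_Mapping.lookup p k * Poly_Mapping.lookup q l)) x)"
    by (simp add: sum_distrib_left sum_distrib_right peval_sum mult_single sum.swap[of _ ?Q])
  also have "\<dots> = (\<Sum>k\<in>?P. \<Sum>l\<in>?Q. (of_real (Poly_Mapping.lookup p k) * mon_eval k x) *
      (of_real (Poly_Mapping.lookup q l) * mon_eval l x))"
    by (simp add: peval_single mon_eval_add mult_ac)
  also have "\<dots> = peval p x * peval q x"
    by (simp add: peval_eq_sum_mon_eval sum_distrib_left sum_distrib_right sum.swap[of _ ?Q])
  finally show ?thesis .
qed

lemma peval_of_real:
  "peval p (\<lambda>i. of_real (x i)) = (of_real (peval p x) :: 'a::{real_algebra_1,comm_ring_1})"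
  by (simp add: peval_def)

lemma peval_cnj: "peval p (\<lambda>i. cnj (z i)) = cnj (peval p z)"
  by (simp add: peval_def)

lemma act_mult: "act (a ** b) z = act a (act b (z::'n::finite \<Rightarrow> 'a::real_algebra_1))"
proof (rule ext)
  fix i
  have "act (a ** b) z i = (\<Sum>j\<in>UNIV. \<Sum>k\<in>UNIV. of_real (a $ i $ k) * (of_real (b $ k $ j) * z j))"
    unfolding act_def matrix_matrix_mult_def
    by (simp add: of_real_sum sum_distrib_right mult.assoc)
  also have "\<dots> = (\<Sum>k\<in>UNIV. \<Sum>j\<in>UNIV. of_real (a $ i $ k) * (of_real (b $ k $ j) * z j))"
    by (rule sum.swap)
  also have "\<dots> = act a (act b z) i"
    unfolding act_def by (simp add: sum_distrib_left)
  finally show "act (a ** b) z i = act a (act b z) i" .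
qed

lemma act_mat_1 [simp]: "act (mat 1) z = z"
  unfolding act_def mat_def
  by (simp add: if_distrib[of of_real] if_distrib[of "\<lambda>a. a * _"] cong: if_cong)

lemma act_of_real: "act g (\<lambda>i. of_real (w i)) = (\<lambda>i. (of_real (act g w i) :: 'a::real_algebra_1))"
  unfolding act_def by (simp add: of_real_sum)

lemma act_cnj: "act g (\<lambda>i. cnj (z i)) = (\<lambda>i. cnj (act g z i))"
  unfolding act_def by simp

locale real_fun_subalgebra =
  fixes P :: "('a \<Rightarrow> 'b::{real_algebra_1,comm_ring_1}) \<Rightarrow> bool"
  assumes const: "\<And>c. P (\<lambda>t. of_real c)"
    and add: "\<And>f g. P f \<Longrightarrow> P g \<Longrightarrow> P (\<lambda>t. f t + g t)"
    and mult: "\<And>f g. P f \<Longrightarrow> P g \<Longrightarrow> P (\<lambda>t. f t * g t)"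
begin

lemma diff: "P f \<Longrightarrow> P g \<Longrightarrow> P (\<lambda>t. f t - g t)"
  using add[OF _ mult[OF const[of "-1"]], of f g] by simp

lemma sum: "(\<And>s. s \<in> S \<Longrightarrow> P (f s)) \<Longrightarrow> P (\<lambda>t. \<Sum>s\<in>S. f s t)"
  by (induction S rule: infinite_finite_induct) (auto intro: add const[of 0, simplified])

lemma prod: "(\<And>s. s \<in> S \<Longrightarrow> P (f s)) \<Longrightarrow> P (\<lambda>t. \<Prod>s\<in>S. f s t)"
  by (induction S rule: infinite_finite_induct) (auto intro: mult const[of 1, simplified])

lemma power: "P f \<Longrightarrow> P (\<lambda>t. f t ^ n)"
  by (induction n) (auto intro: mult const[of 1, simplified])

lemma peval_comp: "(\<And>i. P (\<lambda>t. u t i)) \<Longrightarrow> P (\<lambda>t. peval p (u t))"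
  unfolding peval_def by (intro sum mult const prod power)

lemma act_comp: "(\<And>i. P (\<lambda>t. u t i)) \<Longrightarrow> P (\<lambda>t. act g (u t) i)"
  unfolding act_def by (intro sum mult const)

end

definition real_polyfun :: "(('n::finite \<Rightarrow> complex) \<Rightarrow> complex) \<Rightarrow> bool" where
  "real_polyfun F \<longleftrightarrow> (\<exists>p::'n rpoly. \<forall>z. F z = peval p z)"

interpretation real_polyfun: real_fun_subalgebra real_polyfun
proof
  show "real_polyfun (\<lambda>z. of_real c)" for c
    unfolding real_polyfun_def by (rule exI[of _ "Poly_Mapping.single 0 c"])
      (simp add: peval_single mon_eval_def)
qed (unfold real_polyfun_def, metis peval_add, metis peval_mult)

lemma real_polyfun_var: "real_polyfun (\<lambda>z. z j)"
proof -
  have "mon_eval (Poly_Mapping.single j 1) z = z j" for z :: "'a \<Rightarrow> complex"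
  proof -
    have "mon_eval (Poly_Mapping.single j 1) z = (\<Prod>i\<in>UNIV. if i = j then z j else 1)"
      unfolding mon_eval_def by (rule prod.cong) (auto simp: lookup_single when_def)
    then show ?thesis by (simp add: prod.delta)
  qed
  then show ?thesis unfolding real_polyfun_def
    by (intro exI[of _ "Poly_Mapping.single (Poly_Mapping.single j 1) 1"]) (simp add: peval_single)
qed

lemma real_polyfun_act: "real_polyfun F \<Longrightarrow> real_polyfun (\<lambda>z. F (act g z))"
  unfolding real_polyfun_def[of F]
  by (auto intro!: real_polyfun.peval_comp real_polyfun.act_comp real_polyfun_var)

lemma real_polyfun_cnj: "real_polyfun F \<Longrightarrow> F (\<lambda>i. cnj (z i)) = cnj (F z)"
  unfolding real_polyfun_def by (metis peval_cnj)

definition complex_polyfun :: "(('n::finite \<Rightarrow> complex) \<Rightarrow> complex) \<Rightarrow> bool" where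
  "complex_polyfun F \<longleftrightarrow>
     (\<exists>A B. real_polyfun A \<and> real_polyfun B \<and> (\<forall>z. F z = A z + \<i> * B z))"

lemma complex_polyfun_const: "complex_polyfun (\<lambda>z. c)"
  unfolding complex_polyfun_def
  by (rule exI[of _ "\<lambda>z. of_real (Re c)"], rule exI[of _ "\<lambda>z. of_real (Im c)"])
     (simp add: real_polyfun.const complex_eq_iff)

interpretation complex_polyfun: real_fun_subalgebra complex_polyfun
proof
  fix F G :: "('a \<Rightarrow> complex) \<Rightarrow> complex"
  assume "complex_polyfun F" "complex_polyfun G"
  then obtain A B A' B' where AB: "real_polyfun A" "real_polyfun B" "\<And>z. F z = A z + \<i> * B z"
    and AB': "real_polyfun A'" "real_polyfun B'" "\<And>z. G z = A' z + \<i> * B' z"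
    unfolding complex_polyfun_def by blast
  show "complex_polyfun (\<lambda>z. F z + G z)"
    unfolding complex_polyfun_def
    by (rule exI[of _ "\<lambda>z. A z + A' z"], rule exI[of _ "\<lambda>z. B z + B' z"])
       (simp add: AB AB' real_polyfun.add algebra_simps)
  show "complex_polyfun (\<lambda>z. F z * G z)"
    unfolding complex_polyfun_def
    by (rule exI[of _ "\<lambda>z. A z * A' z - B z * B' z"], rule exI[of _ "\<lambda>z. A z * B' z + B z * A' z"])
       (simp add: AB AB' real_polyfun.diff real_polyfun.add real_polyfun.mult algebra_simps)
qed (rule complex_polyfun_const)

lemma complex_polyfun_var: "complex_polyfun (\<lambda>z. z j)"
  unfolding complex_polyfun_def
  by (rule exI[of _ "\<lambda>z. z j"], rule exI[of _ "\<lambda>z. 0"])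
     (simp add: real_polyfun_var real_polyfun.const[of 0, simplified])

lemma complex_polyfun_separating:
  fixes a :: "'n::finite \<Rightarrow> complex"
  assumes "finite T"
  obtains F where "complex_polyfun F" "F a = 1" "\<And>b. b \<in> T - {a} \<Longrightarrow> F b = 0"
proof
  define j where "j = (\<lambda>b::'n \<Rightarrow> complex. SOME i. a i \<noteq> b i)"
  have j: "a (j b) \<noteq> b (j b)" if "b \<noteq> a" for b
    unfolding j_def by (rule someI_ex) (use that in auto)
  define F where "F = (\<lambda>z. \<Prod>b\<in>T-{a}. (z (j b) - b (j b)) / (a (j b) - b (j b)))"
  show "complex_polyfun F"
    unfolding F_def divide_inverse
    by (intro complex_polyfun.prod complex_polyfun.mult complex_polyfun.diff
        complex_polyfun_var complex_polyfun_const)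
  show "F a = 1" unfolding F_def by (rule prod.neutral) (use j in auto)
  show "F b = 0" if "b \<in> T - {a}" for b
    unfolding F_def using that assms by (intro prod_zero) auto
qed

lemma complex_polyfun_indicator:
  assumes "finite S" "finite S'" "S \<inter> S' = {}"
  obtains F where "complex_polyfun F" "\<And>z. z \<in> S \<Longrightarrow> F z = 1" "\<And>z. z \<in> S' \<Longrightarrow> F z = 0"
proof -
  have "\<exists>F. complex_polyfun F \<and> F a = 1 \<and> (\<forall>b\<in>(S \<union> S') - {a}. F b = 0)" for a
    by (rule complex_polyfun_separating[of "S \<union> S'" a]) (use assms in auto)
  then obtain \<delta> where \<delta>: "\<And>a.
      complex_polyfun (\<delta> a) \<and> \<delta> a a = 1 \<and> (\<forall>b\<in>(S \<union> S') - {a}. \<delta> a b = 0)"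
    by metis
  show ?thesis
  proof
    show "complex_polyfun (\<lambda>z. \<Sum>a\<in>S. \<delta> a z)"
      using \<delta> by (intro complex_polyfun.sum) auto
    show "(\<Sum>a\<in>S. \<delta> a z) = 1" if "z \<in> S" for z
    proof -
      have "(\<Sum>a\<in>S - {z}. \<delta> a z) = 0" using \<delta> that by (intro sum.neutral) auto
      then show ?thesis using \<delta> that assms(1) by (simp add: sum.remove[of S z])
    qed
    show "(\<Sum>a\<in>S. \<delta> a z) = 0" if "z \<in> S'" for z
      using \<delta> that assms(3) by (intro sum.neutral) auto
  qed
qed

definition univariate_polyfun :: "(complex \<Rightarrow> complex) \<Rightarrow> bool" where
  "univariate_polyfun f \<longleftrightarrow> (\<exists>q. \<forall>t. f t = poly q t)"

interpretation univariate_polyfun: real_fun_subalgebra univariate_polyfun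
proof
  show "univariate_polyfun (\<lambda>t. of_real c)" for c
    unfolding univariate_polyfun_def by (rule exI[of _ "[:of_real c:]"]) auto
qed (unfold univariate_polyfun_def, metis poly_add, metis poly_mult)

lemma univariate_polyfun_id: "univariate_polyfun (\<lambda>t. t)"
  unfolding univariate_polyfun_def by (rule exI[of _ "[:0, 1:]"]) auto

lemma univariate_polyfun_vanishing_on_reals:
  assumes "univariate_polyfun f" "\<And>s::real. f (of_real s) = 0"
  shows "f t = 0"
proof -
  obtain q where q: "\<And>t. f t = poly q t" using assms(1) unfolding univariate_polyfun_def by blast
  have "infinite (range complex_of_real)"
    using finite_imageD[OF _ inj_of_real] infinite_UNIV_char_0 by blast
  moreover have "range complex_of_real \<subseteq> {x. poly q x = 0}" using assms(2) q by auto
  ultimately have "q = 0" using poly_roots_finite finite_subset by blast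
  then show ?thesis by (simp add: q)
qed

lemma inv_ring_complex_invariant:
  fixes z :: "'n::finite \<Rightarrow> complex"
  assumes "p \<in> inv_ring K" "g \<in> K"
  shows "peval p (act g z) = peval p z"
proof -
  \<comment> \<open>inv_ring only asks for invariance at real points. Along the complex line
    t \<mapsto> Re z + t Im z the defect is a univariate polynomial vanishing on \<real>, hence at t = \<i>.\<close>
  define u where "u = (\<lambda>t::complex. \<lambda>j. of_real (Re (z j)) + t * of_real (Im (z j)))"
  define f where "f = (\<lambda>t. peval p (act g (u t)) - peval p (u t))"
  have "univariate_polyfun (\<lambda>t. u t i)" for i
    unfolding u_def by (intro univariate_polyfun.add univariate_polyfun.mult
        univariate_polyfun.const univariate_polyfun_id)
  then have "univariate_polyfun f"
    unfolding f_def by (intro univariate_polyfun.diff univariate_polyfun.peval_comp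
        univariate_polyfun.act_comp)
  moreover have "f (of_real s) = 0" for s
  proof -
    define v where "v = (\<lambda>j. Re (z j) + s * Im (z j))"
    have u_real: "u (of_real s) = (\<lambda>j. of_real (v j))" unfolding u_def v_def by auto
    have "peval p (act g v) = peval p v" using assms unfolding inv_ring_def by blast
    then show ?thesis unfolding f_def u_real act_of_real peval_of_real by simp
  qed
  ultimately have "f \<i> = 0" by (rule univariate_polyfun_vanishing_on_reals)
  moreover have "u \<i> = z" unfolding u_def by (rule ext) (metis complex_eq mult.commute)
  ultimately show ?thesis unfolding f_def by simp
qed

lemma
  assumes "invertible A"
  shows matrix_inv_right: "A ** matrix_inv A = mat 1"
    and matrix_inv_left: "matrix_inv A ** A = mat 1"
  using someI_ex[OF assms[unfolded invertible_def]] unfolding matrix_inv_def by auto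

lemma act_matrix_inv: "invertible a \<Longrightarrow> act (matrix_inv a) (act a z) = z"
  by (metis act_mult act_mat_1 matrix_inv_left)

lemma
  assumes "finite_matrix_group G"
  shows finite_matrix_group_finite: "finite G"
    and finite_matrix_group_mat_1: "mat 1 \<in> G"
    and finite_matrix_group_mult: "a \<in> G \<Longrightarrow> b \<in> G \<Longrightarrow> a ** b \<in> G"
    and finite_matrix_group_matrix_inv: "a \<in> G \<Longrightarrow> matrix_inv a \<in> G"
    and finite_matrix_group_invertible: "a \<in> G \<Longrightarrow> invertible a"
  using assms unfolding finite_matrix_group_def by auto

lemma bij_betw_mult_right:
  assumes G: "finite_matrix_group G" and h: "h \<in> G"
  shows "bij_betw (\<lambda>g. g ** h) G G"
proof (rule bij_betwI[where g = "\<lambda>g. g ** matrix_inv h"])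
  show "(\<lambda>g. g ** h) \<in> G \<rightarrow> G" "(\<lambda>g. g ** matrix_inv h) \<in> G \<rightarrow> G"
    using G h by (auto intro: finite_matrix_group_mult finite_matrix_group_matrix_inv)
  have "invertible h" using G h by (rule finite_matrix_group_invertible)
  show "g ** h ** matrix_inv h = g" for g
    using \<open>invertible h\<close> by (simp add: matrix_inv_right matrix_mul_rid flip: matrix_mul_assoc)
  show "g ** matrix_inv h ** h = g" for g
    using \<open>invertible h\<close> by (simp add: matrix_inv_left matrix_mul_rid flip: matrix_mul_assoc)
qed

definition orbit :: "(real^'n^'n) set \<Rightarrow> ('n::finite \<Rightarrow> 'a::real_algebra_1) \<Rightarrow> ('n \<Rightarrow> 'a) set" where
  "orbit G x = (\<lambda>g. act g x) ` G"

lemma reynolds_real_polyfun: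
  assumes G: "finite_matrix_group G" and B: "real_polyfun B"
  obtains p where "p \<in> inv_ring G" "\<And>z. peval p z = (\<Sum>g\<in>G. B (act g z))"
proof -
  define P where "P = (\<lambda>z. \<Sum>g\<in>G. B (act g z))"
  have "real_polyfun P" unfolding P_def by (intro real_polyfun.sum real_polyfun_act B)
  then obtain p where p: "\<And>z. P z = peval p z" unfolding real_polyfun_def by blast
  have P_invariant: "P (act h z) = P z" if "h \<in> G" for h z
  proof -
    have "P (act h z) = (\<Sum>g\<in>G. B (act (g ** h) z))" unfolding P_def by (simp add: act_mult)
    also have "\<dots> = P z"
      unfolding P_def by (rule sum.reindex_bij_betw[OF bij_betw_mult_right[OF G that]])
    finally show ?thesis .
  qed
  have "p \<in> inv_ring G"
    unfolding inv_ring_def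
  proof (intro CollectI ballI allI)
    fix h w assume "h \<in> G"
    then have "(of_real (peval p (act h w)) :: complex) = of_real (peval p w)"
      using P_invariant[of h "\<lambda>i. of_real (w i)"] by (simp add: p act_of_real peval_of_real)
    then show "peval p (act h w) = peval p w" by simp
  qed
  with p that show thesis unfolding P_def by metis
qed

lemma cnj_orbit_disjoint:
  fixes x :: "'n::finite \<Rightarrow> complex"
  assumes G: "finite_matrix_group G" and not_mem: "\<not> (\<exists>g\<in>G. (\<lambda>i. cnj (x i)) = act g x)"
  shows "orbit G x \<inter> (\<lambda>z i. cnj (z i)) ` orbit G x = {}"
proof -
  have False if "g \<in> G" "g' \<in> G" "act g' x = (\<lambda>i. cnj (act g x i))" for g g'
  proof -
    have "invertible g" using G \<open>g \<in> G\<close> by (rule finite_matrix_group_invertible)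
    have "act g (\<lambda>i. cnj (x i)) = act g' x" using that(3) by (simp add: act_cnj)
    then have "act (matrix_inv g) (act g (\<lambda>i. cnj (x i))) = act (matrix_inv g ** g') x"
      by (simp only: act_mult)
    then have "(\<lambda>i. cnj (x i)) = act (matrix_inv g ** g') x"
      by (simp only: act_matrix_inv[OF \<open>invertible g\<close>])
    moreover have "matrix_inv g ** g' \<in> G"
      using G that(1,2) by (intro finite_matrix_group_mult finite_matrix_group_matrix_inv)
    ultimately show False using not_mem by blast
  qed
  then show ?thesis unfolding orbit_def by auto
qed

lemma cnj_mem_orbit:
  fixes x :: "'n::finite \<Rightarrow> complex"
  assumes G: "finite_matrix_group G" and real: "\<And>p. p \<in> inv_ring G \<Longrightarrow> Im (peval p x) = 0"
  shows "\<exists>g\<in>G. (\<lambda>i. cnj (x i)) = act g x"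
proof (rule ccontr)
  assume not_mem: "\<not> ?thesis"
  let ?cnj = "\<lambda>z i. cnj (z i)"
  have "finite G" using G by (rule finite_matrix_group_finite)
  then have fin: "finite (orbit G x)" unfolding orbit_def by blast
  obtain F where "complex_polyfun F" and F_orbit: "\<And>z. z \<in> orbit G x \<Longrightarrow> F z = 1"
      and F_cnj_orbit: "\<And>z. z \<in> ?cnj ` orbit G x \<Longrightarrow> F z = 0"
    using complex_polyfun_indicator[OF fin finite_imageI[OF fin] cnj_orbit_disjoint[OF G not_mem]]
    by blast
  then obtain A B where A: "real_polyfun A" and B: "real_polyfun B"
      and F: "\<And>z. F z = A z + \<i> * B z"
    unfolding complex_polyfun_def by blast
  have B_orbit: "B z = - \<i> / 2" if "z \<in> orbit G x" for z
  proof -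
    have at_z: "A z + \<i> * B z = 1" using F_orbit[OF that] F by simp
    have "?cnj z \<in> ?cnj ` orbit G x" using that by (rule imageI)
    then have "F (?cnj z) = 0" by (rule F_cnj_orbit)
    then have "cnj (A z) + \<i> * cnj (B z) = 0"
      by (simp add: F real_polyfun_cnj[OF A] real_polyfun_cnj[OF B])
    then have "cnj (cnj (A z) + \<i> * cnj (B z)) = 0" by simp
    then have at_cnj_z: "A z - \<i> * B z = 0" by simp
    have "B z = - \<i> / 2 * ((A z + \<i> * B z) - (A z - \<i> * B z))" by (simp add: algebra_simps)
    then show ?thesis by (simp only: at_z at_cnj_z) simp
  qed
  obtain p where "p \<in> inv_ring G" and p: "\<And>z. peval p z = (\<Sum>g\<in>G. B (act g z))"
    using reynolds_real_polyfun[OF G B] by blast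
  have "peval p x = (\<Sum>g\<in>G. - \<i> / 2)"
    unfolding p by (rule sum.cong[OF refl], rule B_orbit) (auto simp: orbit_def)
  then have "Im (peval p x) = - real (card G) / 2" by simp
  moreover have "card G > 0"
    using \<open>finite G\<close> finite_matrix_group_mat_1[OF G] by (auto simp: card_gt_0_iff)
  ultimately have "Im (peval p x) \<noteq> 0" by simp
  with real[OF \<open>p \<in> inv_ring G\<close>] show False by blast
qed

lemma cnj_eq_act_square:
  assumes cnj_x: "(\<lambda>i. cnj (x i)) = act g x"
  shows "act (g ** g) x = x"
proof -
  have "act (g ** g) x = act g (\<lambda>i. cnj (x i))" by (simp only: act_mult flip: cnj_x)
  also have "\<dots> = (\<lambda>i. cnj (act g x i))" by (rule act_cnj)
  also have "\<dots> = x" by (simp flip: cnj_x)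
  finally show ?thesis .
qed

lemma cnj_eq_act_conjugate:
  assumes cnj_x: "(\<lambda>i. cnj (x i)) = act g x" and "invertible k"
  shows "(\<lambda>i. cnj (act (matrix_inv k) x i)) = act (matrix_inv k ** g ** k) (act (matrix_inv k) x)"
proof -
  have k_cancel: "act k (act (matrix_inv k) x) = x"
    by (simp add: matrix_inv_right[OF \<open>invertible k\<close>] flip: act_mult)
  have "(\<lambda>i. cnj (act (matrix_inv k) x i)) = act (matrix_inv k) (act g x)"
    by (simp only: cnj_x flip: act_cnj)
  also have "\<dots> = act (matrix_inv k ** g ** k) (act (matrix_inv k) x)"
    by (simp only: act_mult k_cancel)
  finally show ?thesis .
qed

lemma peval_real_if_cnj_eq_act:
  assumes "p \<in> inv_ring K" "h \<in> K" "(\<lambda>i. cnj (y i)) = act h y"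
  shows "Im (peval p y) = 0"
proof -
  have "cnj (peval p y) = peval p y"
    using inv_ring_complex_invariant[OF assms(1,2)] assms(3) by (simp flip: peval_cnj)
  then show ?thesis by (metis cnj.simps(2) neg_equal_zero)
qed

lemma ring_hom_on_Re_peval:
  assumes "\<And>p. p \<in> S \<Longrightarrow> Im (peval p y) = 0"
  shows "ring_hom_on S (\<lambda>p. Re (peval p y))"
  unfolding ring_hom_on_def using assms by (simp add: peval_add peval_mult)

lemma broad_conjugate_mem:
  assumes "broad H G" "g \<in> G" "g ** g = mat 1"
  obtains k where "k \<in> G" "matrix_inv k ** g ** k \<in> H"
proof (cases "g = mat 1")
  case True
  with assms(1) show ?thesis
    using that[of "mat 1"] unfolding broad_def elem_abelian_2_subgroup_def is_subgroup_def
    by (auto simp: matrix_mul_rid)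
next
  case False
  with assms show ?thesis using that unfolding broad_def involution_def by blast
qed

theorem lemma3p5:
  fixes G H :: "(real^'n::finite^'n) set" and \<phi> :: "'n rpoly \<Rightarrow> real"
  assumes "finite_matrix_group G"
    and "broad H G"
    and "ring_hom_on (inv_ring G) \<phi>"
    and "principal_orbit_type G \<phi>"
  shows "\<exists>\<psi>. ring_hom_on (inv_ring H) \<psi> \<and> (\<forall>p\<in>inv_ring G. \<psi> p = \<phi> p)"
proof -
  obtain x :: "'n \<Rightarrow> complex" where x: "\<forall>p\<in>inv_ring G. complex_of_real (\<phi> p) = peval p x"
    and stab: "\<forall>g\<in>G. act g x = x \<longrightarrow> g = mat 1"
    using assms(4) unfolding principal_orbit_type_def by blast
  have "Im (peval p x) = 0" if "p \<in> inv_ring G" for p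
    using x that by (metis Im_complex_of_real)
  then obtain g where "g \<in> G" and cnj_x: "(\<lambda>i. cnj (x i)) = act g x"
    using cnj_mem_orbit[OF assms(1)] by blast
  have "g ** g = mat 1"
    using stab cnj_eq_act_square[OF cnj_x] finite_matrix_group_mult[OF assms(1) \<open>g \<in> G\<close> \<open>g \<in> G\<close>]
    by blast
  then obtain k where "k \<in> G" and "matrix_inv k ** g ** k \<in> H"
    using broad_conjugate_mem[OF assms(2) \<open>g \<in> G\<close>] by blast
  define y where "y = act (matrix_inv k) x"
  have "invertible k" using assms(1) \<open>k \<in> G\<close> by (rule finite_matrix_group_invertible)
  with cnj_x have cnj_y: "(\<lambda>i. cnj (y i)) = act (matrix_inv k ** g ** k) y"
    unfolding y_def by (rule cnj_eq_act_conjugate)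
  have "ring_hom_on (inv_ring H) (\<lambda>p. Re (peval p y))"
    using peval_real_if_cnj_eq_act[OF _ \<open>matrix_inv k ** g ** k \<in> H\<close> cnj_y]
    by (rule ring_hom_on_Re_peval)
  moreover have "Re (peval p y) = \<phi> p" if "p \<in> inv_ring G" for p
  proof -
    have "matrix_inv k \<in> G" using assms(1) \<open>k \<in> G\<close> by (rule finite_matrix_group_matrix_inv)
    with that have "peval p y = peval p x" unfolding y_def by (rule inv_ring_complex_invariant)
    with x that show ?thesis by (metis Re_complex_of_real)
  qed
  ultimately show ?thesis by blast
qed

end
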